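(* Let $d\ge 2$. For every $R \subseteq \{0,1,\dots,d-1\}$, $$\min_{m \in \mathcal{M}_d(R)} \| m - \textsc{max} \|_\infty = \min_{m \in \mathcal{M}^s_d(R)} \| m - \textsc{max} \|_\infty.$$
   Context: For $x\in\mathbb{R}^d$ and nonempty $A\subseteq\{1,\dots,d\}$, $s(x;A)=\max\{x_j:j\in A\}$; $C(k,r,d)$ is the $k$-th $r$-element subset of $\{1,\dots,d\}$ in lexicographic order. $\mathcal{M}_d(R)$ is the set of functions $x\mapsto \beta_0+\sum_{r\in R\setminus\{0\}}\sum_{j=1}^{\binom dr}\beta_r^j s(x;C(j,r,d))$ with real coefficients, the intercept $\beta_0$ present iff $0\in R$. $\mathcal{M}_d^s(R)=\{m\in\mathcal{M}_d(R): m(x_1,\dots,x_d)=m(x_{\sigma_1},\dots,x_{\sigma_d})\text{ for all permutations }\sigma\text{ of }\{1,\dots,d\}\}$. $\textsc{max}(x)=\max_i x_i$ and $\|\cdot\|_\infty$ is the sup norm over $[0,1]^d$. *)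

theory Defs
  imports Complex_Main "HOL-Combinatorics.Permutations"
begin

text \<open>Points of R^d are functions nat => real; only coordinates 1..d matter.\<close>

definition smax :: "(nat \<Rightarrow> real) \<Rightarrow> nat set \<Rightarrow> real" where
  "smax x A = Max (x ` A)"

definition maxd :: "nat \<Rightarrow> (nat \<Rightarrow> real) \<Rightarrow> real" where
  "maxd d x = Max (x ` {1..d})"

definition cube :: "nat \<Rightarrow> (nat \<Rightarrow> real) set" where
  "cube d = {x. \<forall>i\<in>{1..d}. 0 \<le> x i \<and> x i \<le> 1}"

definition supnorm :: "nat \<Rightarrow> ((nat \<Rightarrow> real) \<Rightarrow> real) \<Rightarrow> real" where
  "supnorm d f = (SUP x\<in>cube d. \<bar>f x\<bar>)"

text \<open>M_d(R): the coefficients beta_r^j, j indexing the r-subsets C(j,r,d) in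
  lexicographic order, are represented by a function beta on the r-subsets
  themselves (the lexicographic enumeration is a bijection).\<close>
definition Mset :: "nat \<Rightarrow> nat set \<Rightarrow> ((nat \<Rightarrow> real) \<Rightarrow> real) set" where
  "Mset d R = {m. \<exists>(b0::real) (beta :: nat set \<Rightarrow> real).
      m = (\<lambda>x. (if 0 \<in> R then b0 else 0) +
             (\<Sum>r\<in>R - {0}. \<Sum>A\<in>{A. A \<subseteq> {1..d} \<and> card A = r}. beta A * smax x A))}"

definition Msym :: "nat \<Rightarrow> nat set \<Rightarrow> ((nat \<Rightarrow> real) \<Rightarrow> real) set" where
  "Msym d R = {m \<in> Mset d R. \<forall>\<sigma> x. \<sigma> permutes {1..d} \<longrightarrow> m x = m (\<lambda>i. x (\<sigma> i))}"

end

theory Submission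
  imports Defs "HOL-Analysis.Analysis"
begin

(* Best approximations from M_d(R) exist: along a minimizing sequence the values at the
   indicator vectors of the subsets of {1..d} stay bounded, and by inclusion-exclusion over
   subsets these values determine the coefficients, so a subsequence of the coefficients
   converges to a minimizer. Averaging a minimizer over all permutations of the coordinates
   gives a symmetric element of M_d(R) with no larger error, since MAX and the cube are
   permutation invariant and the sup norm is convex. *)

lemma smax_attained:
  assumes "finite A" "A \<noteq> {}"
  obtains a where "a \<in> A" "smax x A = x a"
proof -
  have "smax x A \<in> x ` A" unfolding smax_def using assms by (intro Max_in) auto
  then show ?thesis using that by blast
qed

lemma abs_smax_le_one:
  assumes "finite A" "A \<noteq> {}" "A \<subseteq> {1..d}" "x \<in> cube d"
  shows "\<bar>smax x A\<bar> \<le> 1"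
proof -
  obtain a where "a \<in> A" "smax x A = x a" using smax_attained[OF assms(1,2)] .
  then show ?thesis using assms(3,4) unfolding cube_def by auto
qed

lemma smax_indicator:
  assumes "finite A" "A \<noteq> {}"
  shows "smax (indicator T) A = (if A \<inter> T = {} then 0 else 1)"
proof -
  obtain a where a: "a \<in> A" "smax (indicator T) A = indicator T a"
    using smax_attained[OF assms] .
  have "indicator T b \<le> smax (indicator T) A" if "b \<in> A" for b
    unfolding smax_def using assms that by (intro Max_ge) auto
  then show ?thesis using a by (auto simp: indicator_def split: if_splits)
qed

lemma smax_permute: "smax (\<lambda>i. x (\<sigma> i)) A = smax x (\<sigma> ` A)"
  unfolding smax_def by (simp add: image_image)

lemma maxd_permute:
  assumes "\<sigma> permutes {1..d}"
  shows "maxd d (\<lambda>i. x (\<sigma> i)) = maxd d x"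
  using smax_permute[of x \<sigma> "{1..d}"] permutes_image[OF assms]
  unfolding smax_def maxd_def by simp

lemma abs_maxd_le_one:
  assumes "d \<ge> 1" "x \<in> cube d"
  shows "\<bar>maxd d x\<bar> \<le> 1"
  using abs_smax_le_one[of "{1..d}" d x] assms unfolding maxd_def smax_def by simp

lemma zero_in_cube: "(\<lambda>_. 0) \<in> cube d"
  unfolding cube_def by simp

lemma indicator_in_cube: "indicator T \<in> cube d"
  unfolding cube_def by (simp add: indicator_def)

lemma cube_permute:
  assumes "\<sigma> permutes {1..d}" "x \<in> cube d"
  shows "(\<lambda>i. x (\<sigma> i)) \<in> cube d"
  using assms permutes_in_image[OF assms(1)] unfolding cube_def by auto

definition term_sets :: "nat \<Rightarrow> nat set \<Rightarrow> nat set set" where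
  "term_sets d R = {A. A \<subseteq> {1..d} \<and> card A \<in> R - {0}}"

lemma finite_term_sets: "finite (term_sets d R)"
  unfolding term_sets_def by (rule finite_subset[of _ "Pow {1..d}"]) auto

lemma term_setsD:
  assumes "A \<in> term_sets d R"
  shows "A \<subseteq> {1..d}" "finite A" "A \<noteq> {}"
  using assms finite_subset[of A "{1..d}"] unfolding term_sets_def by auto

lemma permutes_image_term_sets:
  assumes "\<sigma> permutes {1..d}" "A \<in> term_sets d R"
  shows "\<sigma> ` A \<in> term_sets d R"
proof -
  have "inj_on \<sigma> A" using permutes_inj[OF assms(1)] by (rule inj_on_subset) simp
  then show ?thesis
    using assms permutes_image[OF assms(1)] unfolding term_sets_def by (auto simp: card_image)
qed

lemma bij_betw_permutes_image_term_sets: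
  assumes "\<sigma> permutes {1..d}"
  shows "bij_betw ((`) \<sigma>) (term_sets d R) (term_sets d R)"
proof (rule bij_betw_byWitness[where f' = "(`) (inv \<sigma>)"])
  show "\<forall>A\<in>term_sets d R. inv \<sigma> ` \<sigma> ` A = A" "\<forall>A\<in>term_sets d R. \<sigma> ` inv \<sigma> ` A = A"
    using permutes_inverses[OF assms] by (simp_all add: image_image)
  show "(`) \<sigma> ` term_sets d R \<subseteq> term_sets d R" "(`) (inv \<sigma>) ` term_sets d R \<subseteq> term_sets d R"
    using permutes_image_term_sets[OF assms] permutes_image_term_sets[OF permutes_inv[OF assms]]
    by auto
qed

definition max_comb :: "nat \<Rightarrow> nat set \<Rightarrow> real \<Rightarrow> (nat set \<Rightarrow> real) \<Rightarrow> (nat \<Rightarrow> real) \<Rightarrow> real" where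
  "max_comb d R b beta x = (if 0 \<in> R then b else 0) + (\<Sum>A\<in>term_sets d R. beta A * smax x A)"

lemma sum_card_layers_eq_sum_term_sets:
  fixes f :: "nat set \<Rightarrow> real"
  assumes "finite R"
  shows "(\<Sum>r\<in>R - {0}. \<Sum>A\<in>{A. A \<subseteq> {1..d} \<and> card A = r}. f A) = (\<Sum>A\<in>term_sets d R. f A)"
proof -
  have finite_Pow: "finite (Pow {1..d})" by simp
  have layer: "{A. A \<subseteq> {1..d} \<and> card A = r} = {A \<in> Pow {1..d}. card A = r}" for r
    by auto
  have "(\<Sum>r\<in>R - {0}. \<Sum>A\<in>{A. A \<subseteq> {1..d} \<and> card A = r}. f A)
      = (\<Sum>r\<in>R - {0}. \<Sum>A\<in>Pow {1..d}. if card A = r then f A else 0)"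
    by (simp only: layer sum.inter_filter[OF finite_Pow])
  also have "\<dots> = (\<Sum>A\<in>Pow {1..d}. \<Sum>r\<in>R - {0}. if card A = r then f A else 0)"
    by (rule sum.swap)
  also have "\<dots> = (\<Sum>A\<in>Pow {1..d}. if card A \<in> R - {0} then f A else 0)"
    using assms by (intro sum.cong refl) (simp add: sum.delta')
  also have "\<dots> = (\<Sum>A\<in>term_sets d R. f A)"
    unfolding term_sets_def by (simp only: sum.inter_filter[OF finite_Pow, symmetric]) auto
  finally show ?thesis .
qed

lemma Mset_iff:
  assumes "finite R"
  shows "m \<in> Mset d R \<longleftrightarrow> (\<exists>b beta. m = max_comb d R b beta)"
  unfolding Mset_def max_comb_def sum_card_layers_eq_sum_term_sets[OF assms] by (simp add: fun_eq_iff)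

lemma bounded_max_comb: "bounded (max_comb d R b beta ` cube d)"
proof (rule boundedI)
  fix y assume "y \<in> max_comb d R b beta ` cube d"
  then obtain x where x: "x \<in> cube d" "y = max_comb d R b beta x" by blast
  have "\<bar>max_comb d R b beta x\<bar> \<le> \<bar>b\<bar> + (\<Sum>A\<in>term_sets d R. \<bar>beta A * smax x A\<bar>)"
    unfolding max_comb_def by (rule order_trans[OF abs_triangle_ineq add_mono]) (auto intro: sum_abs)
  also have "\<dots> \<le> \<bar>b\<bar> + (\<Sum>A\<in>term_sets d R. \<bar>beta A\<bar>)"
    using abs_smax_le_one[OF term_setsD(2,3,1) x(1)]
    by (intro add_left_mono sum_mono) (simp add: abs_mult mult_left_le)
  finally show "norm y \<le> \<bar>b\<bar> + (\<Sum>A\<in>term_sets d R. \<bar>beta A\<bar>)" using x(2) by simp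
qed

lemma bounded_Mset_minus:
  assumes "finite R" "m \<in> Mset d R" "bounded (g ` cube d)"
  shows "bounded ((\<lambda>x. m x - g x) ` cube d)"
  using assms(2) bounded_minus_comp[OF bounded_max_comb assms(3)] Mset_iff[OF assms(1)] by auto

lemma max_comb_sum:
  "(\<Sum>p\<in>P. max_comb d R (b p) (beta p) x) = max_comb d R (\<Sum>p\<in>P. b p) (\<lambda>A. \<Sum>p\<in>P. beta p A) x"
  unfolding max_comb_def by (simp add: sum.distrib sum_distrib_right sum.swap[of _ P])

lemma max_comb_divide: "max_comb d R b beta x / c = max_comb d R (b / c) (\<lambda>A. beta A / c) x"
  unfolding max_comb_def by (simp add: add_divide_distrib sum_divide_distrib)

lemma max_comb_permute:
  assumes "\<sigma> permutes {1..d}"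
  shows "max_comb d R b beta (\<lambda>i. x (\<sigma> i)) = max_comb d R b (\<lambda>A. beta (inv \<sigma> ` A)) x"
proof -
  have "(\<Sum>A\<in>term_sets d R. beta A * smax x (\<sigma> ` A))
      = (\<Sum>A\<in>term_sets d R. beta (inv \<sigma> ` \<sigma> ` A) * smax x (\<sigma> ` A))"
    using permutes_inverses[OF assms] by (simp add: image_image)
  also have "\<dots> = (\<Sum>A\<in>term_sets d R. beta (inv \<sigma> ` A) * smax x A)"
    by (rule sum.reindex_bij_betw[OF bij_betw_permutes_image_term_sets[OF assms]])
  finally show ?thesis unfolding max_comb_def smax_permute by simp
qed

lemma supnorm_upper:
  assumes "bounded (f ` cube d)" "x \<in> cube d"
  shows "\<bar>f x\<bar> \<le> supnorm d f"
proof -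
  have "bdd_above ((\<lambda>x. \<bar>f x\<bar>) ` cube d)"
    using assms(1) bounded_norm_comp[of f "cube d"] by (simp add: bounded_imp_bdd_above)
  then show ?thesis unfolding supnorm_def by (intro cSUP_upper assms(2))
qed

lemma supnorm_least:
  assumes "\<And>x. x \<in> cube d \<Longrightarrow> \<bar>f x\<bar> \<le> c"
  shows "supnorm d f \<le> c"
  unfolding supnorm_def using zero_in_cube assms by (intro cSUP_least) auto

lemma supnorm_nonneg: "bounded (f ` cube d) \<Longrightarrow> 0 \<le> supnorm d f"
  using supnorm_upper[OF _ zero_in_cube] by fastforce

lemma supnorm_le_of_tendsto:
  assumes "\<And>n. bounded (f n ` cube d)" "\<And>x. (\<lambda>n. f n x) \<longlonglongrightarrow> g x"
    and "(\<lambda>n. supnorm d (f n)) \<longlonglongrightarrow> L"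
  shows "supnorm d g \<le> L"
proof (rule supnorm_least)
  fix x assume "x \<in> cube d"
  show "\<bar>g x\<bar> \<le> L"
    using supnorm_upper[OF assms(1) \<open>x \<in> cube d\<close>]
    by (intro LIMSEQ_le[OF tendsto_rabs[OF assms(2)] assms(3)]) auto
qed

definition symmetrize :: "nat \<Rightarrow> ((nat \<Rightarrow> real) \<Rightarrow> real) \<Rightarrow> (nat \<Rightarrow> real) \<Rightarrow> real" where
  "symmetrize d f x = (\<Sum>\<sigma> | \<sigma> permutes {1..d}. f (\<lambda>i. x (\<sigma> i))) / fact d"

lemma card_permutations_interval: "card {\<sigma>. \<sigma> permutes {1..d}} = fact d"
  by (rule card_permutations) simp_all

lemma symmetrize_permute:
  assumes "\<tau> permutes {1..d}"
  shows "symmetrize d f (\<lambda>i. x (\<tau> i)) = symmetrize d f x"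
  unfolding symmetrize_def
  using setum_permutations_compose_left[OF assms, of "\<lambda>\<sigma>. f (\<lambda>i. x (\<sigma> i))"]
  by (simp add: o_def)

lemma symmetrize_Mset:
  assumes "finite R" "m \<in> Mset d R"
  shows "symmetrize d m \<in> Mset d R"
proof -
  obtain b beta where m: "m = max_comb d R b beta" using assms Mset_iff by blast
  have "symmetrize d m x = max_comb d R (\<Sum>\<sigma> | \<sigma> permutes {1..d}. b / fact d)
      (\<lambda>A. (\<Sum>\<sigma> | \<sigma> permutes {1..d}. beta (inv \<sigma> ` A)) / fact d) x" for x
    unfolding symmetrize_def m max_comb_divide[symmetric] sum_divide_distrib[symmetric] max_comb_sum[symmetric]
    by (simp add: max_comb_permute)
  then show ?thesis using Mset_iff[OF assms(1)] by blast
qed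

lemma symmetrize_Msym:
  assumes "finite R" "m \<in> Mset d R"
  shows "symmetrize d m \<in> Msym d R"
  unfolding Msym_def using symmetrize_Mset[OF assms] symmetrize_permute by auto

lemma symmetrize_diff_invariant:
  assumes "\<And>\<sigma> x. \<sigma> permutes {1..d} \<Longrightarrow> g (\<lambda>i. x (\<sigma> i)) = g x"
  shows "symmetrize d (\<lambda>x. f x - g x) x = symmetrize d f x - g x"
proof -
  have "(\<Sum>\<sigma> | \<sigma> permutes {1..d}. g (\<lambda>i. x (\<sigma> i))) = (\<Sum>\<sigma> | \<sigma> permutes {1..d}. g x)"
    using assms by (intro sum.cong) auto
  then show ?thesis
    unfolding symmetrize_def sum_subtractf sum_constant card_permutations_interval
    by (simp add: diff_divide_distrib)
qed

lemma supnorm_symmetrize_le: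
  assumes "bounded (f ` cube d)"
  shows "supnorm d (symmetrize d f) \<le> supnorm d f"
proof (rule supnorm_least)
  fix x assume x: "x \<in> cube d"
  have "\<bar>\<Sum>\<sigma> | \<sigma> permutes {1..d}. f (\<lambda>i. x (\<sigma> i))\<bar> \<le> (\<Sum>\<sigma> | \<sigma> permutes {1..d}. supnorm d f)"
    using supnorm_upper[OF assms cube_permute[OF _ x]]
    by (intro order_trans[OF sum_abs sum_mono]) auto
  then show "\<bar>symmetrize d f x\<bar> \<le> supnorm d f"
    unfolding symmetrize_def sum_constant card_permutations_interval by (simp add: field_simps)
qed

lemma common_convergent_subseq:
  fixes u :: "'a \<Rightarrow> nat \<Rightarrow> real"
  assumes "finite P" "\<And>p. p \<in> P \<Longrightarrow> bounded (range (u p))"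
  obtains s where "strict_mono s" "\<And>p. p \<in> P \<Longrightarrow> convergent (u p \<circ> s)"
  using assms
proof (induction P arbitrary: thesis rule: finite_induct)
  case empty
  show ?case using empty(1)[of id] by (simp add: strict_mono_def)
next
  case (insert q P)
  obtain s where s: "strict_mono s" "\<And>p. p \<in> P \<Longrightarrow> convergent (u p \<circ> s)"
    using insert.IH insert.prems(2) by blast
  have "bounded (range (u q \<circ> s))"
    using insert.prems(2)[of q] by (rule bounded_subset) auto
  then obtain t l where t: "strict_mono t" "(u q \<circ> s \<circ> t) \<longlonglongrightarrow> l"
    using bounded_imp_convergent_subsequence by blast
  have "convergent (u p \<circ> (s \<circ> t))" if "p \<in> insert q P" for p
    using that t convergent_subseq_convergent[OF s(2) t(1)]
    by (auto simp: convergent_def o_assoc)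
  then show ?case using insert.prems(1) strict_mono_o[OF s(1) t(1)] by blast
qed

lemma max_comb_indicator_empty: "max_comb d R b beta (indicator {}) = (if 0 \<in> R then b else 0)"
  unfolding max_comb_def using smax_indicator[OF term_setsD(2,3)] by simp

lemma max_comb_indicator_diff:
  assumes "A0 \<subseteq> {1..d}"
  shows "max_comb d R b beta (indicator {1..d}) - max_comb d R b beta (indicator ({1..d} - A0))
       = (\<Sum>A\<in>{A \<in> term_sets d R. A \<subseteq> A0}. beta A)"
proof -
  have "beta A * smax (indicator {1..d}) A - beta A * smax (indicator ({1..d} - A0)) A
      = (if A \<subseteq> A0 then beta A else 0)" if "A \<in> term_sets d R" for A
    using term_setsD[OF that] smax_indicator[OF term_setsD(2,3)[OF that]] by auto
  then show ?thesis
    unfolding max_comb_def sum.inter_filter[OF finite_term_sets]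
    by (simp add: sum_subtractf[symmetric])
qed

lemma convergent_max_comb_coeff:
  assumes "\<And>T. T \<subseteq> {1..d} \<Longrightarrow> convergent (\<lambda>n. max_comb d R (b n) (beta n) (indicator T))"
    and "A \<in> term_sets d R"
  shows "convergent (\<lambda>n. beta n A)"
  using term_setsD(2)[OF assms(2)] assms(2)
proof (induction A rule: finite_psubset_induct)
  case (psubset A0)
  let ?lower = "{A \<in> term_sets d R. A \<subset> A0}"
  have "{A \<in> term_sets d R. A \<subseteq> A0} = insert A0 ?lower" using psubset.prems by auto
  then have "beta n A0 = (max_comb d R (b n) (beta n) (indicator {1..d})
      - max_comb d R (b n) (beta n) (indicator ({1..d} - A0))) - (\<Sum>A\<in>?lower. beta n A)" for n
    using max_comb_indicator_diff[OF term_setsD(1)[OF psubset.prems]] finite_term_sets by simp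
  moreover have "convergent (\<lambda>n. (max_comb d R (b n) (beta n) (indicator {1..d})
      - max_comb d R (b n) (beta n) (indicator ({1..d} - A0))) - (\<Sum>A\<in>?lower. beta n A))"
    using assms(1) psubset.IH by (intro convergent_diff convergent_sum) auto
  ultimately show ?case by simp
qed

lemma tendsto_max_comb:
  assumes "0 \<in> R \<Longrightarrow> b \<longlonglongrightarrow> b0"
    and "\<And>A. A \<in> term_sets d R \<Longrightarrow> (\<lambda>n. beta n A) \<longlonglongrightarrow> beta0 A"
  shows "(\<lambda>n. max_comb d R (b n) (beta n) x) \<longlonglongrightarrow> max_comb d R b0 beta0 x"
  unfolding max_comb_def using assms by (intro tendsto_intros) auto

lemma bdd_below_Mset_error:
  assumes "finite R" "bounded (g ` cube d)"
  shows "bdd_below ((\<lambda>m. supnorm d (\<lambda>x. m x - g x)) ` Mset d R)"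
  using supnorm_nonneg[OF bounded_Mset_minus[OF assms(1) _ assms(2)]]
  by (intro bdd_belowI[of _ 0]) auto

lemma Mset_minimizing_sequence:
  assumes "finite R" "bounded (g ` cube d)"
  obtains b beta where "(\<lambda>n. supnorm d (\<lambda>x. max_comb d R (b n) (beta n) x - g x))
    \<longlonglongrightarrow> (INF m\<in>Mset d R. supnorm d (\<lambda>x. m x - g x))"
proof -
  define E where "E m = supnorm d (\<lambda>x. m x - g x)" for m
  have Mset: "m \<in> Mset d R \<longleftrightarrow> (\<exists>b beta. m = max_comb d R b beta)" for m
    by (rule Mset_iff[OF assms(1)])
  have "(INF m\<in>Mset d R. E m) \<in> closure (E ` Mset d R)"
    using Mset bdd_below_Mset_error[OF assms] unfolding E_def by (intro closure_contains_Inf) auto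
  then obtain y where y: "\<And>n. y n \<in> E ` Mset d R" "y \<longlonglongrightarrow> (INF m\<in>Mset d R. E m)"
    unfolding closure_sequential by blast
  then have "\<forall>n. \<exists>b beta. y n = E (max_comb d R b beta)" using Mset by (metis imageE)
  then obtain b beta where "y = (\<lambda>n. E (max_comb d R (b n) (beta n)))" by metis
  with y(2) show thesis using that unfolding E_def by simp
qed

lemma max_comb_error_le_limit:
  assumes "bounded (g ` cube d)"
    and E_lim: "(\<lambda>n. supnorm d (\<lambda>x. max_comb d R (b n) (beta n) x - g x)) \<longlonglongrightarrow> L"
  obtains b0 beta0 where "supnorm d (\<lambda>x. max_comb d R b0 beta0 x - g x) \<le> L"
proof -
  have bounded_error: "bounded ((\<lambda>x. max_comb d R b beta x - g x) ` cube d)" for b beta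
    by (rule bounded_minus_comp[OF bounded_max_comb assms(1)])
  obtain K where K: "\<And>x. x \<in> cube d \<Longrightarrow> \<bar>g x\<bar> \<le> K"
    using assms(1) unfolding bounded_iff by auto
  obtain B where B: "\<And>n. \<bar>supnorm d (\<lambda>x. max_comb d R (b n) (beta n) x - g x)\<bar> \<le> B"
    using convergent_imp_Bseq[OF convergentI[OF E_lim]] unfolding Bseq_def by auto
  define u where "u T n = max_comb d R (b n) (beta n) (indicator T)" for T n
  have "bounded (range (u T))" for T
  proof (rule boundedI)
    fix v assume "v \<in> range (u T)"
    then obtain n where "v = u T n" by blast
    then show "norm v \<le> B + K"
      using supnorm_upper[OF bounded_error[of "b n" "beta n"] indicator_in_cube[of T]]
        K[OF indicator_in_cube, of T] B[of n]
      unfolding u_def by simp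
  qed
  then obtain s where s: "strict_mono s" "\<And>T. T \<in> Pow {1..d} \<Longrightarrow> convergent (u T \<circ> s)"
    using common_convergent_subseq[of "Pow {1..d}" u] by blast
  have values_convergent: "convergent (\<lambda>n. max_comb d R (b (s n)) (beta (s n)) (indicator T))"
    if "T \<subseteq> {1..d}" for T
    using s(2)[of T] that unfolding u_def by (simp add: o_def)
  define b0 where "b0 = lim (\<lambda>n. b (s n))"
  define beta0 where "beta0 A = lim (\<lambda>n. beta (s n) A)" for A
  have "(\<lambda>n. max_comb d R (b (s n)) (beta (s n)) x) \<longlonglongrightarrow> max_comb d R b0 beta0 x" for x
  proof (rule tendsto_max_comb)
    show "(\<lambda>n. b (s n)) \<longlonglongrightarrow> b0" if "0 \<in> R"
      using values_convergent[of "{}"] that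
      unfolding b0_def by (simp add: max_comb_indicator_empty convergent_LIMSEQ_iff)
    show "(\<lambda>n. beta (s n) A) \<longlonglongrightarrow> beta0 A" if "A \<in> term_sets d R" for A
      using convergent_max_comb_coeff[OF values_convergent that]
      unfolding beta0_def by (simp add: convergent_LIMSEQ_iff)
  qed
  then have "supnorm d (\<lambda>x. max_comb d R b0 beta0 x - g x) \<le> L"
    using bounded_error LIMSEQ_subseq_LIMSEQ[OF E_lim s(1)]
    by (intro supnorm_le_of_tendsto[where f = "\<lambda>n x. max_comb d R (b (s n)) (beta (s n)) x - g x"])
      (auto intro: tendsto_diff simp: o_def)
  then show thesis by (rule that)
qed

lemma Mset_best_approximation:
  assumes "finite R" "bounded (g ` cube d)"
  obtains m where "m \<in> Mset d R"
    "\<And>m'. m' \<in> Mset d R \<Longrightarrow> supnorm d (\<lambda>x. m x - g x) \<le> supnorm d (\<lambda>x. m' x - g x)"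
proof -
  define E where "E m = supnorm d (\<lambda>x. m x - g x)" for m
  have Mset: "m \<in> Mset d R \<longleftrightarrow> (\<exists>b beta. m = max_comb d R b beta)" for m
    by (rule Mset_iff[OF assms(1)])
  obtain b beta where "(\<lambda>n. E (max_comb d R (b n) (beta n))) \<longlonglongrightarrow> (INF m\<in>Mset d R. E m)"
    using Mset_minimizing_sequence[OF assms] unfolding E_def by blast
  then obtain b0 beta0 where le_INF: "E (max_comb d R b0 beta0) \<le> (INF m\<in>Mset d R. E m)"
    using max_comb_error_le_limit[OF assms(2)] unfolding E_def by blast
  have "E (max_comb d R b0 beta0) \<le> E m" if "m \<in> Mset d R" for m
    using le_INF cINF_lower[OF bdd_below_Mset_error[OF assms] that] unfolding E_def by linarith
  moreover have "max_comb d R b0 beta0 \<in> Mset d R" using Mset by blast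
  ultimately show thesis using that unfolding E_def by blast
qed

theorem lemma5:
  fixes d :: nat and R :: "nat set"
  assumes "d \<ge> 2" and "R \<subseteq> {0..d-1}"
  shows "(\<exists>m\<in>Mset d R. supnorm d (\<lambda>x. m x - maxd d x)
             = (INF m'\<in>Mset d R. supnorm d (\<lambda>x. m' x - maxd d x)))
       \<and> (\<exists>m\<in>Msym d R. supnorm d (\<lambda>x. m x - maxd d x)
             = (INF m'\<in>Msym d R. supnorm d (\<lambda>x. m' x - maxd d x)))
       \<and> (INF m\<in>Mset d R. supnorm d (\<lambda>x. m x - maxd d x))
           = (INF m\<in>Msym d R. supnorm d (\<lambda>x. m x - maxd d x))"
proof -
  define E where "E m = supnorm d (\<lambda>x. m x - maxd d x)" for m
  have "finite R" using assms(2) finite_subset by blast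
  have bounded_maxd: "bounded (maxd d ` cube d)"
    using abs_maxd_le_one assms(1) by (intro boundedI[where B = 1]) auto
  obtain mo where mo: "mo \<in> Mset d R" "\<And>m. m \<in> Mset d R \<Longrightarrow> E mo \<le> E m"
    using Mset_best_approximation[OF \<open>finite R\<close> bounded_maxd] unfolding E_def by blast
  define ms where "ms = symmetrize d mo"
  have ms: "ms \<in> Msym d R" unfolding ms_def by (rule symmetrize_Msym[OF \<open>finite R\<close> mo(1)])
  have "bounded ((\<lambda>x. mo x - maxd d x) ` cube d)"
    by (rule bounded_Mset_minus[OF \<open>finite R\<close> mo(1) bounded_maxd])
  moreover have "symmetrize d (\<lambda>x. mo x - maxd d x) = (\<lambda>x. ms x - maxd d x)"
    unfolding ms_def using symmetrize_diff_invariant maxd_permute by blast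
  ultimately have "E ms \<le> E mo" unfolding E_def by (metis supnorm_symmetrize_le)
  then have ms_min: "E ms \<le> E m" if "m \<in> Mset d R" for m
    using mo(2)[OF that] by linarith
  have Msym_Mset: "Msym d R \<subseteq> Mset d R" unfolding Msym_def by auto
  have "(INF m\<in>Mset d R. E m) = E mo" using mo by (intro cInf_eq_minimum) auto
  moreover have "(INF m\<in>Mset d R. E m) = E ms" using ms Msym_Mset ms_min by (intro cInf_eq_minimum) auto
  moreover have "(INF m\<in>Msym d R. E m) = E ms" using ms Msym_Mset ms_min by (intro cInf_eq_minimum) auto
  ultimately show ?thesis using mo(1) ms unfolding E_def by (metis (no_types, lifting))
qed

end
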